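(* Let $G$ be a (Hausdorff) topological group. Then: (1) $G$ is a cosmic space if and only if $G$ is separable and has countable $cn$-character; (2) $G$ is an $\aleph_0$-space if and only if $G$ is separable and has countable $ck$-character; (3) $G$ is a $\mathcal{P}_0$-space if and only if $G$ is separable and has countable $cp$-character.
   Context: All spaces are Hausdorff. A family $\mathcal{N}$ of subsets of a space $X$ is a network if whenever $x\in U$ with $U$ open, $x\in N\subseteq U$ for some $N\in\mathcal{N}$; it is a $k$-network if whenever $K\subseteq U$ with $K$ compact and $U$ open, $K\subseteq\bigcup\mathcal{F}\subseteq U$ for some finite $\mathcal{F}\subseteq\mathcal{N}$. A space is cosmic if it is regular with a countable network, and an $\aleph_0$-space if it is regular with a countable $k$-network. Let $x\in X$. A family $\mathcal{N}$ of subsets of $X$ is: - a $cn$-network at $x$ if for each neighborhood $O_x$ of $x$ the set $\bigcup\{N\in\mathcal{N}: x\in N\subseteq O_x\}$ is a neighborhood of $x$; - a $ck$-network at $x$ if for every neighborhood $O_x$ of $x$ there is a neighborhood $U_x$ of $x$ such that for each compact $K\subseteq U_x$ there is a finite $\mathcal{F}\subseteq\mathcal{N}$ with $x\in\bigcap\mathcal{F}$ and $K\subseteq\bigcup\mathcal{F}\subseteq O_x$; - a $cp$-network at $x$ if for every neighborhood $O_x$ of $x$ there is $N\in\mathcal{N}$ with $x\in N\subseteq O_x$, and for every $A\subseteq X$ with $x\in\overline{A}\setminus A$ and every neighborhood $O_x$ of $x$ there is $N\in\mathcal{N}$ with $x\in N\subseteq O_x$ and $N\cap A$ infinite. A family is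 a $cn$-, $ck$-, $cp$-network in $X$ if it is one at every point of $X$. For $\mathfrak{n}\in\{cn,ck,cp\}$, the $\mathfrak{n}$-character of $X$ at $x$ is the least cardinality of an $\mathfrak{n}$-network at $x$, and the $\mathfrak{n}$-character of $X$ is the supremum over $x\in X$. A $\mathcal{P}_0$-space is a regular space admitting a countable $cp$-network (a countable family which is a $cp$-network at every point). *)

theory Defs
  imports "HOL-Analysis.Analysis"
begin

text \<open>All notions below are for the (type-class) topology on the type 'a; the space is UNIV.
  Hausdorffness is imposed by the class t2_space in the theorem.\<close>

definition nbhd :: "'a::topological_space set \<Rightarrow> 'a \<Rightarrow> bool" where
  "nbhd O' x \<longleftrightarrow> x \<in> interior O'"

definition is_network :: "'a::topological_space set set \<Rightarrow> bool" where
  "is_network \<N> \<longleftrightarrow> (\<forall>x U. open U \<and> x \<in> U \<longrightarrow> (\<exists>N\<in>\<N>. x \<in> N \<and> N \<subseteq> U))"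

definition is_k_network :: "'a::topological_space set set \<Rightarrow> bool" where
  "is_k_network \<N> \<longleftrightarrow> (\<forall>K U. compact K \<and> open U \<and> K \<subseteq> U \<longrightarrow>
      (\<exists>\<F>. finite \<F> \<and> \<F> \<subseteq> \<N> \<and> K \<subseteq> \<Union>\<F> \<and> \<Union>\<F> \<subseteq> U))"

definition cosmic :: "'a::topological_space itself \<Rightarrow> bool" where
  "cosmic _ \<longleftrightarrow> regular_space (euclidean :: 'a topology) \<and>
     (\<exists>\<N> :: 'a set set. countable \<N> \<and> is_network \<N>)"

definition aleph0_space :: "'a::topological_space itself \<Rightarrow> bool" where
  "aleph0_space _ \<longleftrightarrow> regular_space (euclidean :: 'a topology) \<and>
     (\<exists>\<N> :: 'a set set. countable \<N> \<and> is_k_network \<N>)"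

definition cn_network_at :: "'a::topological_space set set \<Rightarrow> 'a \<Rightarrow> bool" where
  "cn_network_at \<N> x \<longleftrightarrow> (\<forall>O'. nbhd O' x \<longrightarrow> nbhd (\<Union>{N\<in>\<N>. x \<in> N \<and> N \<subseteq> O'}) x)"

definition ck_network_at :: "'a::topological_space set set \<Rightarrow> 'a \<Rightarrow> bool" where
  "ck_network_at \<N> x \<longleftrightarrow> (\<forall>O'. nbhd O' x \<longrightarrow> (\<exists>U. nbhd U x \<and>
      (\<forall>K. compact K \<and> K \<subseteq> U \<longrightarrow>
        (\<exists>\<F>. finite \<F> \<and> \<F> \<subseteq> \<N> \<and> x \<in> \<Inter>\<F> \<and> K \<subseteq> \<Union>\<F> \<and> \<Union>\<F> \<subseteq> O'))))"

definition cp_network_at :: "'a::topological_space set set \<Rightarrow> 'a \<Rightarrow> bool" where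
  "cp_network_at \<N> x \<longleftrightarrow>
     (\<forall>O'. nbhd O' x \<longrightarrow> (\<exists>N\<in>\<N>. x \<in> N \<and> N \<subseteq> O')) \<and>
     (\<forall>A O'. x \<in> closure A - A \<and> nbhd O' x \<longrightarrow>
        (\<exists>N\<in>\<N>. x \<in> N \<and> N \<subseteq> O' \<and> infinite (N \<inter> A)))"

text \<open>Countable n-character: the supremum over x of the least cardinality of an
  n-network at x is at most aleph_0, i.e. every point has a countable n-network at it.\<close>

definition countable_cn_character :: "'a::topological_space itself \<Rightarrow> bool" where
  "countable_cn_character _ \<longleftrightarrow> (\<forall>x::'a. \<exists>\<N>. countable \<N> \<and> cn_network_at \<N> x)"

definition countable_ck_character :: "'a::topological_space itself \<Rightarrow> bool" where
  "countable_ck_character _ \<longleftrightarrow> (\<forall>x::'a. \<exists>\<N>. countable \<N> \<and> ck_network_at \<N> x)"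

definition countable_cp_character :: "'a::topological_space itself \<Rightarrow> bool" where
  "countable_cp_character _ \<longleftrightarrow> (\<forall>x::'a. \<exists>\<N>. countable \<N> \<and> cp_network_at \<N> x)"

definition P0_space :: "'a::topological_space itself \<Rightarrow> bool" where
  "P0_space _ \<longleftrightarrow> regular_space (euclidean :: 'a topology) \<and>
     (\<exists>\<N> :: 'a set set. countable \<N> \<and> (\<forall>x. cp_network_at \<N> x))"

end

theory Submission
  imports Defs
begin

text \<open>A countable network is separable (pick a point in each member), and adding x to every
  member of a countable network (resp. k-network) gives a countable cn-network (resp. ck-network)
  at x; so the forward implications hold in every topological space. Conversely, a topological
  group is regular, and if D is countable and dense and \<N> is a countable cn-, ck- or cp-network
  at 0, the translates d + N (d \<in> D, N \<in> \<N>) form a global network of the corresponding kind: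
  every x is d + (-d + x) with -d + x as close to 0 as we like. For cp-networks a single
  translate d + N cannot be made to contain x and at the same time meet a set A accumulating at x
  infinitely often, so one uses d + (N + N'), where N catches -d + x and N' meets -x + A in
  infinitely many points.\<close>

lemma nbhd_iff: "nbhd S x \<longleftrightarrow> (\<exists>U. open U \<and> x \<in> U \<and> U \<subseteq> S)"
  unfolding nbhd_def interior_def by blast

lemma nbhd_open: "open U \<Longrightarrow> x \<in> U \<Longrightarrow> nbhd U x"
  unfolding nbhd_iff by blast

lemma nbhdE:
  assumes "nbhd S x"
  obtains U where "open U" "x \<in> U" "U \<subseteq> S"
  using assms unfolding nbhd_iff by blast

lemma mem_closure_iff_open_Int:
  "x \<in> closure S \<longleftrightarrow> (\<forall>T. open T \<longrightarrow> x \<in> T \<longrightarrow> T \<inter> S \<noteq> {})"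
proof
  assume "x \<in> closure S"
  then show "\<forall>T. open T \<longrightarrow> x \<in> T \<longrightarrow> T \<inter> S \<noteq> {}" using open_Int_closure_eq_empty by blast
next
  assume "\<forall>T. open T \<longrightarrow> x \<in> T \<longrightarrow> T \<inter> S \<noteq> {}"
  then show "x \<in> closure S" unfolding closure_iff_nhds_not_empty by blast
qed

lemma separable_space_euclidean_iff:
  "separable_space (euclidean :: 'a::topological_space topology) \<longleftrightarrow>
     (\<exists>D::'a set. countable D \<and> (\<forall>T. open T \<longrightarrow> T \<noteq> {} \<longrightarrow> T \<inter> D \<noteq> {}))"
proof -
  have "closure D = UNIV \<longleftrightarrow> (\<forall>T. open T \<longrightarrow> T \<noteq> {} \<longrightarrow> T \<inter> D \<noteq> {})" for D :: "'a set"
    unfolding set_eq_iff mem_closure_iff_open_Int by blast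
  then show ?thesis
    unfolding separable_space_def euclidean_closure_of topspace_euclidean by simp
qed

lemma separable_space_if_countable_network:
  assumes "countable \<N>" "is_network (\<N> :: 'a::topological_space set set)"
  shows "separable_space (euclidean :: 'a topology)"
proof -
  define D where "D = (\<lambda>N. SOME x. x \<in> N) ` \<N>"
  have "T \<inter> D \<noteq> {}" if "open T" "T \<noteq> {}" for T
  proof -
    obtain y where "y \<in> T" using \<open>T \<noteq> {}\<close> by blast
    then obtain N where "N \<in> \<N>" "y \<in> N" "N \<subseteq> T"
      using assms(2) \<open>open T\<close> unfolding is_network_def by blast
    moreover have "(SOME x. x \<in> N) \<in> N" using \<open>y \<in> N\<close> by (rule someI)
    ultimately show ?thesis unfolding D_def by blast
  qed
  moreover have "countable D" using assms(1) unfolding D_def by simp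
  ultimately have "countable D \<and> (\<forall>T. open T \<longrightarrow> T \<noteq> {} \<longrightarrow> T \<inter> D \<noteq> {})"
    by blast
  then show ?thesis unfolding separable_space_euclidean_iff by blast
qed

lemma is_k_networkE:
  assumes "is_k_network \<N>" "compact K" "open U" "K \<subseteq> U"
  obtains \<F> where "finite \<F>" "\<F> \<subseteq> \<N>" "K \<subseteq> \<Union>\<F>" "\<Union>\<F> \<subseteq> U"
proof -
  have "\<exists>\<F>. finite \<F> \<and> \<F> \<subseteq> \<N> \<and> K \<subseteq> \<Union>\<F> \<and> \<Union>\<F> \<subseteq> U"
    using assms(1)[unfolded is_k_network_def, rule_format, of K U] assms(2-4) by simp
  then show thesis by (elim exE conjE) (rule that)
qed

lemma is_network_if_is_k_network:
  assumes "is_k_network (\<N> :: 'a::topological_space set set)"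
  shows "is_network \<N>"
  unfolding is_network_def
proof (intro allI impI)
  fix x :: 'a and U assume "open U \<and> x \<in> U"
  then have "open U" "{x} \<subseteq> U" by simp_all
  then obtain \<F> where \<F>: "finite \<F>" "\<F> \<subseteq> \<N>" "{x} \<subseteq> \<Union>\<F>" "\<Union>\<F> \<subseteq> U"
    by (rule is_k_networkE[OF assms compact_sing])
  then obtain N where "N \<in> \<F>" "x \<in> N" by blast
  with \<F> show "\<exists>N\<in>\<N>. x \<in> N \<and> N \<subseteq> U" by blast
qed

lemma cp_network_at_nbhdD:
  assumes "cp_network_at \<N> x" "nbhd O' x"
  shows "\<exists>N\<in>\<N>. x \<in> N \<and> N \<subseteq> O'"
  using assms(1)[unfolded cp_network_at_def, THEN conjunct1, rule_format, OF assms(2)] .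

lemma cp_network_at_closureD:
  assumes "cp_network_at \<N> x" "nbhd O' x" "x \<in> closure A" "x \<notin> A"
  shows "\<exists>N\<in>\<N>. x \<in> N \<and> N \<subseteq> O' \<and> infinite (N \<inter> A)"
  using assms(1)[unfolded cp_network_at_def, THEN conjunct2, rule_format, of A O'] assms(2-4)
  by simp

lemma is_network_if_cp_network_at:
  assumes "\<And>x. cp_network_at (\<N> :: 'a::topological_space set set) x"
  shows "is_network \<N>"
  unfolding is_network_def
proof (intro allI impI)
  fix x :: 'a and U assume "open U \<and> x \<in> U"
  then show "\<exists>N\<in>\<N>. x \<in> N \<and> N \<subseteq> U"
    using cp_network_at_nbhdD[OF assms nbhd_open] by simp
qed

lemma cn_network_at_insert:
  assumes "is_network \<N>"
  shows "cn_network_at (insert x ` \<N>) x"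
  unfolding cn_network_at_def
proof (intro allI impI)
  fix O' assume "nbhd O' x"
  then obtain U where U: "open U" "x \<in> U" "U \<subseteq> O'" by (rule nbhdE)
  have "U \<subseteq> \<Union>{N \<in> insert x ` \<N>. x \<in> N \<and> N \<subseteq> O'}"
  proof
    fix y assume "y \<in> U"
    then obtain N where "N \<in> \<N>" "y \<in> N" "N \<subseteq> U"
      using assms U(1) unfolding is_network_def by blast
    with U have "insert x N \<in> {N \<in> insert x ` \<N>. x \<in> N \<and> N \<subseteq> O'}" "y \<in> insert x N"
      by auto
    then show "y \<in> \<Union>{N \<in> insert x ` \<N>. x \<in> N \<and> N \<subseteq> O'}" by blast
  qed
  with U show "nbhd (\<Union>{N \<in> insert x ` \<N>. x \<in> N \<and> N \<subseteq> O'}) x"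
    unfolding nbhd_iff by blast
qed

lemma ck_network_at_insert:
  assumes "is_k_network \<N>"
  shows "ck_network_at (insert x ` \<N>) x"
  unfolding ck_network_at_def
proof (intro allI impI)
  fix O' assume "nbhd O' x"
  then obtain U where U: "open U" "x \<in> U" "U \<subseteq> O'" by (rule nbhdE)
  have cover: "\<exists>\<F>. finite \<F> \<and> \<F> \<subseteq> insert x ` \<N> \<and> x \<in> \<Inter>\<F> \<and> K \<subseteq> \<Union>\<F> \<and> \<Union>\<F> \<subseteq> O'"
    if K: "compact K" "K \<subseteq> U" for K
  proof -
    obtain \<F> where \<F>: "finite \<F>" "\<F> \<subseteq> \<N>" "K \<subseteq> \<Union>\<F>" "\<Union>\<F> \<subseteq> U"
      by (rule is_k_networkE[OF assms K(1) U(1) K(2)])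
    have "finite (insert x ` \<F>)" using \<F>(1) by simp
    moreover have "insert x ` \<F> \<subseteq> insert x ` \<N>" using \<F>(2) by (rule image_mono)
    moreover have "K \<subseteq> \<Union>(insert x ` \<F>)" using \<F>(3) by blast
    moreover have "\<Union>(insert x ` \<F>) \<subseteq> O'" using \<F>(4) U by blast
    moreover have "x \<in> \<Inter>(insert x ` \<F>)" by blast
    ultimately show ?thesis by (intro exI[of _ "insert x ` \<F>"] conjI)
  qed
  show "\<exists>U. nbhd U x \<and> (\<forall>K. compact K \<and> K \<subseteq> U \<longrightarrow>
      (\<exists>\<F>. finite \<F> \<and> \<F> \<subseteq> insert x ` \<N> \<and> x \<in> \<Inter>\<F> \<and> K \<subseteq> \<Union>\<F> \<and> \<Union>\<F> \<subseteq> O'))"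
  proof (intro exI[of _ U] conjI allI impI)
    show "nbhd U x" using U(1,2) by (rule nbhd_open)
  next
    fix K assume "compact K \<and> K \<subseteq> U"
    then show "\<exists>\<F>. finite \<F> \<and> \<F> \<subseteq> insert x ` \<N> \<and> x \<in> \<Inter>\<F> \<and> K \<subseteq> \<Union>\<F> \<and> \<Union>\<F> \<subseteq> O'"
      using cover by simp
  qed
qed

lemma cp_network_at_meets:
  assumes "cp_network_at \<N> x" "nbhd O' x" "x \<in> closure A"
  shows "\<exists>N\<in>\<N>. x \<in> N \<and> N \<subseteq> O' \<and> N \<inter> A \<noteq> {}"
proof (cases "x \<in> A")
  case True
  then show ?thesis using cp_network_at_nbhdD[OF assms(1,2)] by blast
next
  case False
  then obtain N where "N \<in> \<N>" "x \<in> N" "N \<subseteq> O'" "infinite (N \<inter> A)"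
    using cp_network_at_closureD[OF assms] by blast
  then show ?thesis by force
qed

lemma cosmic_imp_separable_cn_character:
  assumes "cosmic TYPE('a::topological_space)"
  shows "separable_space (euclidean :: 'a topology) \<and> countable_cn_character TYPE('a)"
  using assms cn_network_at_insert separable_space_if_countable_network
  unfolding cosmic_def countable_cn_character_def by blast

lemma aleph0_space_imp_separable_ck_character:
  assumes "aleph0_space TYPE('a::topological_space)"
  shows "separable_space (euclidean :: 'a topology) \<and> countable_ck_character TYPE('a)"
  using assms ck_network_at_insert separable_space_if_countable_network is_network_if_is_k_network
  unfolding aleph0_space_def countable_ck_character_def by blast

lemma P0_space_imp_separable_cp_character:
  assumes "P0_space TYPE('a::topological_space)"
  shows "separable_space (euclidean :: 'a topology) \<and> countable_cp_character TYPE('a)"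
  using assms separable_space_if_countable_network is_network_if_cp_network_at
  unfolding P0_space_def countable_cp_character_def by blast

lemma left_translation_eq_vimage: "(+) a ` S = (\<lambda>z. - a + z) -` (S :: 'a::group_add set)"
  by (force simp: add.assoc[symmetric])

lemma open_left_translation:
  assumes "open S"
  shows "open ((+) (a::'a::topological_group_add) ` S)"
  unfolding left_translation_eq_vimage by (intro open_vimage assms continuous_intros)

lemma compact_left_translation:
  assumes "compact S"
  shows "compact ((+) (a::'a::topological_group_add) ` S)"
  by (intro compact_continuous_image assms continuous_intros)

lemma closure_left_translation:
  "closure ((+) (a::'a::topological_group_add) ` S) = (+) a ` closure S"
proof -
  have sub: "(+) b ` closure T \<subseteq> closure ((+) b ` T)" for b :: 'a and T
    by (intro image_closure_subset continuous_intros closure_subset closed_closure)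
  have "closure ((+) a ` S) = (+) a ` (+) (- a) ` closure ((+) a ` S)"
    by (simp add: image_image add.assoc[symmetric])
  also have "\<dots> \<subseteq> (+) a ` closure S"
    by (intro image_mono) (use sub[of "- a" "(+) a ` S"] in \<open>simp add: image_image add.assoc[symmetric]\<close>)
  finally show ?thesis using sub by blast
qed

text \<open>One continuity estimate at (0, 0, 0) serves for all the neighbourhood arithmetic below,
  which uses it in the forms -a + b, b + c and -a + b + c.\<close>

lemma nhds_zero_neg_add_add:
  fixes U :: "'a::topological_group_add set"
  assumes "open U" "x \<in> U"
  obtains V where "open V" "0 \<in> V" "\<And>a b c. a \<in> V \<Longrightarrow> b \<in> V \<Longrightarrow> c \<in> V \<Longrightarrow> x + (- a + b + c) \<in> U"
proof -
  let ?f = "\<lambda>p. x + (- fst p + fst (snd p) + snd (snd p))"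
  have "open (?f -` U)" by (intro open_vimage assms(1) continuous_intros)
  moreover have "(0, 0, 0) \<in> ?f -` U" using assms(2) by simp
  ultimately obtain A BC where A: "open A" "open BC" "(0, 0, 0) \<in> A \<times> BC" "A \<times> BC \<subseteq> ?f -` U"
    by (rule open_prod_elim)
  from A(2,3) have "open BC" "(0, 0) \<in> BC" by auto
  then obtain B C where BC: "open B" "open C" "(0, 0) \<in> B \<times> C" "B \<times> C \<subseteq> BC"
    by (rule open_prod_elim)
  show thesis
  proof
    show "open (A \<inter> B \<inter> C)" using A(1) BC(1,2) by (intro open_Int)
    show "0 \<in> A \<inter> B \<inter> C" using A(3) BC(3) by simp
  next
    fix a b c assume abc: "a \<in> A \<inter> B \<inter> C" "b \<in> A \<inter> B \<inter> C" "c \<in> A \<inter> B \<inter> C"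
    then have "(b, c) \<in> BC" using BC(4) by blast
    with abc(1) have "(a, b, c) \<in> ?f -` U" using A(4) by blast
    then show "x + (- a + b + c) \<in> U" by simp
  qed
qed

lemma nhds_zero_closure_subset:
  fixes U :: "'a::topological_group_add set"
  assumes "open U" "0 \<in> U"
  obtains V where "open V" "0 \<in> V" "closure V \<subseteq> U"
proof -
  obtain V where V: "open V" "0 \<in> V" "\<And>a b c. a \<in> V \<Longrightarrow> b \<in> V \<Longrightarrow> c \<in> V \<Longrightarrow> 0 + (- a + b + c) \<in> U"
    using nhds_zero_neg_add_add assms by blast
  have "z \<in> U" if z: "z \<in> closure V" for z
  proof -
    have "open ((\<lambda>y. - y + z) -` V)" by (intro open_vimage V(1) continuous_intros)
    moreover have "z \<in> (\<lambda>y. - y + z) -` V" using V(2) by simp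
    ultimately obtain y where "y \<in> V" "- y + z \<in> V"
      using z unfolding mem_closure_iff_open_Int by blast
    then have "0 + (- 0 + y + (- y + z)) \<in> U" using V by blast
    then show "z \<in> U" by (simp add: add.assoc[symmetric])
  qed
  with V(1,2) that show thesis by blast
qed

lemma regular_space_topological_group:
  "regular_space (euclidean :: 'a::topological_group_add topology)"
  unfolding regular_space euclidean_closure_of
proof (intro allI impI)
  fix C and a :: 'a
  assume "closedin euclidean C \<and> a \<in> topspace euclidean - C"
  then have "open ((+) (- a) ` (- C))" "0 \<in> (+) (- a) ` (- C)"
    by (auto simp: open_left_translation open_Compl image_iff intro: bexI[of _ a])
  then obtain V where V: "open V" "0 \<in> V" "closure V \<subseteq> (+) (- a) ` (- C)"
    by (rule nhds_zero_closure_subset)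
  have "closure ((+) a ` V) = (+) a ` closure V" by (rule closure_left_translation)
  also have "\<dots> \<subseteq> (+) a ` (+) (- a) ` (- C)" using V(3) by (rule image_mono)
  also have "\<dots> = - C" by (simp add: image_image add.assoc[symmetric])
  finally have "closure ((+) a ` V) \<subseteq> - C" .
  moreover have "open ((+) a ` V)" "a \<in> (+) a ` V"
    using V(1,2) by (auto simp: open_left_translation image_iff intro: bexI[of _ 0])
  ultimately show "\<exists>U. openin euclidean U \<and> a \<in> U \<and> disjnt C (closure U)"
    by (metis disjnt_iff ComplD subsetD open_openin)
qed

lemma dense_left_translate:
  fixes D :: "'a::topological_group_add set"
  assumes dense: "\<forall>T. open T \<longrightarrow> T \<noteq> {} \<longrightarrow> T \<inter> D \<noteq> {}" and "open V" "0 \<in> V"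
  obtains d where "d \<in> D" "- d + x \<in> V"
proof -
  have "open ((\<lambda>d. - d + x) -` V)" by (intro open_vimage assms(2) continuous_intros)
  moreover have "x \<in> (\<lambda>d. - d + x) -` V" using assms(3) by simp
  ultimately show thesis using dense that by blast
qed

lemma compact_add_nhds_zero_subset:
  fixes K :: "'a::topological_group_add set"
  assumes "compact K" "open U" "K \<subseteq> U"
  obtains V where "open V" "0 \<in> V" "\<And>k v. k \<in> K \<Longrightarrow> v \<in> V \<Longrightarrow> k + v \<in> U"
proof -
  have "open ((\<lambda>p. snd p + fst p) -` U)" by (intro open_vimage assms(2) continuous_intros)
  moreover have "{0} \<times> K \<subseteq> (\<lambda>p. snd p + fst p) -` U" using assms(3) by auto
  ultimately have "\<exists>V. 0 \<in> V \<and> open V \<and> V \<times> K \<subseteq> (\<lambda>p. snd p + fst p) -` U"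
    by (rule Elementary_Topology.tube_lemma[OF assms(1)])
  then obtain V where V: "0 \<in> V" "open V" "V \<times> K \<subseteq> (\<lambda>p. snd p + fst p) -` U"
    by (elim exE conjE)
  show thesis
  proof (rule that[OF V(2,1)])
    fix k v assume "k \<in> K" "v \<in> V"
    then have "(v, k) \<in> (\<lambda>p. snd p + fst p) -` U" using V(3) by blast
    then show "k + v \<in> U" by simp
  qed
qed

definition translates :: "'a::plus set \<Rightarrow> 'a set set \<Rightarrow> 'a set set" where
  "translates D \<N> = (\<lambda>(d, N). (+) d ` N) ` (D \<times> \<N>)"

lemma countable_translates: "countable D \<Longrightarrow> countable \<N> \<Longrightarrow> countable (translates D \<N>)"
  unfolding translates_def by simp

lemma translate_in_translates: "d \<in> D \<Longrightarrow> N \<in> \<N> \<Longrightarrow> (+) d ` N \<in> translates D \<N>"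
  unfolding translates_def by force

lemma is_network_translates:
  fixes D :: "'a::topological_group_add set"
  assumes dense: "\<forall>T. open T \<longrightarrow> T \<noteq> {} \<longrightarrow> T \<inter> D \<noteq> {}" and cn: "cn_network_at \<N> 0"
  shows "is_network (translates D \<N>)"
  unfolding is_network_def
proof (intro allI impI)
  fix x :: 'a and U assume "open U \<and> x \<in> U"
  then obtain V where V: "open V" "0 \<in> V"
    "\<And>a b c. a \<in> V \<Longrightarrow> b \<in> V \<Longrightarrow> c \<in> V \<Longrightarrow> x + (- a + b + c) \<in> U"
    using nhds_zero_neg_add_add by blast
  have "nbhd (\<Union>{N \<in> \<N>. 0 \<in> N \<and> N \<subseteq> V}) 0"
    using cn[unfolded cn_network_at_def, rule_format, OF nbhd_open[OF V(1,2)]] .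
  then obtain T where T: "open T" "0 \<in> T" "T \<subseteq> \<Union>{N \<in> \<N>. 0 \<in> N \<and> N \<subseteq> V}"
    by (rule nbhdE)
  obtain d where d: "d \<in> D" "- d + x \<in> T" by (rule dense_left_translate[OF dense T(1,2)])
  then obtain N where N: "N \<in> \<N>" "N \<subseteq> V" "- d + x \<in> N" using T(3) by blast
  have "x \<in> (+) d ` N" using N(3) by (force simp: add.assoc[symmetric])
  moreover have "(+) d ` N \<subseteq> U"
  proof
    fix y assume "y \<in> (+) d ` N"
    then obtain n where "n \<in> N" "y = d + n" by blast
    moreover have "x + (- (- d + x) + n + 0) \<in> U" using V N \<open>n \<in> N\<close> by blast
    moreover have "x + (- (- d + x) + n + 0) = d + n" by (simp add: minus_add add.assoc[symmetric])
    ultimately show "y \<in> U" by simp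
  qed
  ultimately show "\<exists>N\<in>translates D \<N>. x \<in> N \<and> N \<subseteq> U"
    using translate_in_translates[OF d(1) N(1)] by blast
qed

lemma finite_translate_cover:
  fixes \<N> :: "'a::topological_group_add set set"
  assumes cover: "\<And>C. compact C \<Longrightarrow> C \<subseteq> W \<Longrightarrow> \<exists>\<F>. finite \<F> \<and> \<F> \<subseteq> \<N> \<and> C \<subseteq> \<Union>\<F> \<and> \<Union>\<F> \<subseteq> V"
    and K: "compact K" and W': "closure W' \<subseteq> W \<inter> V"
    and U: "\<And>k a b. k \<in> K \<Longrightarrow> a \<in> V \<Longrightarrow> b \<in> V \<Longrightarrow> k + (- a + b) \<in> U"
  shows "\<exists>\<F>. finite \<F> \<and> \<F> \<subseteq> (\<lambda>N. (+) d ` N) ` \<N> \<and> K \<inter> (+) d ` W' \<subseteq> \<Union>\<F> \<and> \<Union>\<F> \<subseteq> U"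
proof (cases "K \<inter> (+) d ` closure W' = {}")
  case True
  then have "K \<inter> (+) d ` W' \<subseteq> \<Union>{}" using closure_subset[of W'] by blast
  then show ?thesis by (intro exI[of _ "{}"]) simp
next
  case False
  then obtain k where k: "k \<in> K" "- d + k \<in> V" using W' by (force simp: add.assoc[symmetric])
  let ?C = "(+) (- d) ` K \<inter> closure W'"
  have "compact ?C" using compact_left_translation[OF K] by (rule compact_Int_closed) simp
  moreover have "?C \<subseteq> W" using W' by blast
  ultimately obtain \<F> where \<F>: "finite \<F>" "\<F> \<subseteq> \<N>" "?C \<subseteq> \<Union>\<F>" "\<Union>\<F> \<subseteq> V"
    using cover by metis
  have "K \<inter> (+) d ` W' \<subseteq> \<Union>((\<lambda>N. (+) d ` N) ` \<F>)"
  proof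
    fix z assume "z \<in> K \<inter> (+) d ` W'"
    then have "- d + z \<in> ?C" using closure_subset[of W'] by (force simp: add.assoc[symmetric])
    then obtain N where "N \<in> \<F>" "- d + z \<in> N" using \<F>(3) by blast
    moreover have "z = d + (- d + z)" by (simp add: add.assoc[symmetric])
    ultimately show "z \<in> \<Union>((\<lambda>N. (+) d ` N) ` \<F>)" by blast
  qed
  moreover have "\<Union>((\<lambda>N. (+) d ` N) ` \<F>) \<subseteq> U"
  proof
    fix y assume "y \<in> \<Union>((\<lambda>N. (+) d ` N) ` \<F>)"
    then obtain n where n: "n \<in> V" "y = d + n" using \<F>(4) by blast
    have "k + (- (- d + k) + n) \<in> U" using U k n(1) by blast
    moreover have "k + (- (- d + k) + n) = y" using n(2) by (simp add: minus_add add.assoc[symmetric])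
    ultimately show "y \<in> U" by simp
  qed
  moreover have "finite ((\<lambda>N. (+) d ` N) ` \<F>)" using \<F>(1) by simp
  moreover have "(\<lambda>N. (+) d ` N) ` \<F> \<subseteq> (\<lambda>N. (+) d ` N) ` \<N>" using \<F>(2) by (rule image_mono)
  ultimately show ?thesis by (intro exI[of _ "(\<lambda>N. (+) d ` N) ` \<F>"] conjI)
qed

lemma ck_network_at_zero_local_cover:
  fixes \<N> :: "'a::topological_group_add set set"
  assumes ck: "ck_network_at \<N> 0" and K: "compact K" and U: "open U" "K \<subseteq> U"
  obtains W where "open W" "0 \<in> W"
    "\<And>d. \<exists>\<F>. finite \<F> \<and> \<F> \<subseteq> (\<lambda>N. (+) d ` N) ` \<N> \<and> K \<inter> (+) d ` W \<subseteq> \<Union>\<F> \<and> \<Union>\<F> \<subseteq> U"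
proof -
  obtain V where V: "open V" "0 \<in> V" "\<And>k v. k \<in> K \<Longrightarrow> v \<in> V \<Longrightarrow> k + v \<in> U"
    using compact_add_nhds_zero_subset[OF K U] by blast
  obtain V1 where V1: "open V1" "0 \<in> V1"
    "\<And>a b c. a \<in> V1 \<Longrightarrow> b \<in> V1 \<Longrightarrow> c \<in> V1 \<Longrightarrow> 0 + (- a + b + c) \<in> V"
    using nhds_zero_neg_add_add[OF V(1,2)] by blast
  have bound: "k + (- a + b) \<in> U" if "k \<in> K" "a \<in> V1" "b \<in> V1" for k a b
    using V(3)[OF that(1)] V1(3)[OF that(2,3) V1(2)] by simp
  have "\<exists>W. nbhd W 0 \<and> (\<forall>C. compact C \<and> C \<subseteq> W \<longrightarrow>
      (\<exists>\<F>. finite \<F> \<and> \<F> \<subseteq> \<N> \<and> 0 \<in> \<Inter>\<F> \<and> C \<subseteq> \<Union>\<F> \<and> \<Union>\<F> \<subseteq> V1))"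
    using ck[unfolded ck_network_at_def, rule_format, OF nbhd_open[OF V1(1,2)]] .
  then obtain W0 where W0: "nbhd W0 0" and cover0: "\<forall>C. compact C \<and> C \<subseteq> W0 \<longrightarrow>
      (\<exists>\<F>. finite \<F> \<and> \<F> \<subseteq> \<N> \<and> 0 \<in> \<Inter>\<F> \<and> C \<subseteq> \<Union>\<F> \<and> \<Union>\<F> \<subseteq> V1)"
    by (elim exE conjE) (rule that)
  have cover: "\<exists>\<F>. finite \<F> \<and> \<F> \<subseteq> \<N> \<and> C \<subseteq> \<Union>\<F> \<and> \<Union>\<F> \<subseteq> V1"
    if "compact C" "C \<subseteq> W0" for C
    using cover0 that by metis
  obtain W1 where W1: "open W1" "0 \<in> W1" "W1 \<subseteq> W0" using W0 by (rule nbhdE)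
  obtain W where W: "open W" "0 \<in> W" "closure W \<subseteq> W1 \<inter> V1"
  proof (rule nhds_zero_closure_subset)
    show "open (W1 \<inter> V1)" "0 \<in> W1 \<inter> V1" using W1(1,2) V1(1,2) by auto
  qed
  have W': "closure W \<subseteq> W0 \<inter> V1" using W(3) W1(3) by blast
  show thesis by (rule that[OF W(1,2) finite_translate_cover[OF cover K W' bound]])
qed

lemma is_k_network_translates:
  fixes D :: "'a::topological_group_add set"
  assumes dense: "\<forall>T. open T \<longrightarrow> T \<noteq> {} \<longrightarrow> T \<inter> D \<noteq> {}" and ck: "ck_network_at \<N> 0"
  shows "is_k_network (translates D \<N>)"
  unfolding is_k_network_def
proof (intro allI impI)
  fix K U :: "'a set" assume KU: "compact K \<and> open U \<and> K \<subseteq> U"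
  then obtain W where W: "open W" "0 \<in> W" and local:
    "\<And>d. \<exists>\<F>. finite \<F> \<and> \<F> \<subseteq> (\<lambda>N. (+) d ` N) ` \<N> \<and> K \<inter> (+) d ` W \<subseteq> \<Union>\<F> \<and> \<Union>\<F> \<subseteq> U"
    using ck_network_at_zero_local_cover[OF ck] by blast
  have "K \<subseteq> (\<Union>d\<in>D. (+) d ` W)"
  proof
    fix z assume "z \<in> K"
    obtain d where "d \<in> D" "- d + z \<in> W" by (rule dense_left_translate[OF dense W])
    moreover have "z = d + (- d + z)" by (simp add: add.assoc[symmetric])
    ultimately show "z \<in> (\<Union>d\<in>D. (+) d ` W)" by blast
  qed
  then obtain F where F: "F \<subseteq> D" "finite F" "K \<subseteq> (\<Union>d\<in>F. (+) d ` W)"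
    using compactE_image[of K D "\<lambda>d. (+) d ` W"] KU open_left_translation[OF W(1)] by blast
  obtain \<F> where \<F>: "\<And>d. finite (\<F> d) \<and> \<F> d \<subseteq> (\<lambda>N. (+) d ` N) ` \<N> \<and>
      K \<inter> (+) d ` W \<subseteq> \<Union>(\<F> d) \<and> \<Union>(\<F> d) \<subseteq> U"
    using local by metis
  have "finite (\<Union>d\<in>F. \<F> d)" using F(2) \<F> by simp
  moreover have "(\<Union>d\<in>F. \<F> d) \<subseteq> translates D \<N>"
  proof
    fix G assume "G \<in> (\<Union>d\<in>F. \<F> d)"
    then obtain d where "d \<in> F" "G \<in> (\<lambda>N. (+) d ` N) ` \<N>" using \<F> by blast
    then show "G \<in> translates D \<N>" using F(1) translate_in_translates by blast
  qed
  moreover have "K \<subseteq> \<Union>(\<Union>d\<in>F. \<F> d)"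
  proof
    fix z assume "z \<in> K"
    then obtain d where "d \<in> F" "z \<in> K \<inter> (+) d ` W" using F(3) by blast
    then show "z \<in> \<Union>(\<Union>d\<in>F. \<F> d)" using \<F>[of d] by blast
  qed
  moreover have "\<Union>(\<Union>d\<in>F. \<F> d) \<subseteq> U"
  proof
    fix y assume "y \<in> \<Union>(\<Union>d\<in>F. \<F> d)"
    then obtain d where "y \<in> \<Union>(\<F> d)" by blast
    then show "y \<in> U" using \<F>[of d] by blast
  qed
  ultimately show "\<exists>\<G>. finite \<G> \<and> \<G> \<subseteq> translates D \<N> \<and> K \<subseteq> \<Union>\<G> \<and> \<Union>\<G> \<subseteq> U"
    by (intro exI[of _ "\<Union>d\<in>F. \<F> d"] conjI)
qed

lemma cp_network_at_zero_translate:
  fixes D :: "'a::topological_group_add set"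
  assumes dense: "\<forall>T. open T \<longrightarrow> T \<noteq> {} \<longrightarrow> T \<inter> D \<noteq> {}" and cp: "cp_network_at \<N> 0"
    and "nbhd O' x"
  obtains V where "open V" "0 \<in> V"
    "\<And>N'. N' \<in> \<N> \<Longrightarrow> N' \<subseteq> V \<Longrightarrow>
       \<exists>S\<in>translates D ((\<lambda>(N, N'). N + N') ` (\<N> \<times> \<N>)). (+) x ` N' \<subseteq> S \<and> S \<subseteq> O'"
proof -
  obtain U where U: "open U" "x \<in> U" "U \<subseteq> O'" using \<open>nbhd O' x\<close> by (rule nbhdE)
  obtain V where V: "open V" "0 \<in> V"
    "\<And>a b c. a \<in> V \<Longrightarrow> b \<in> V \<Longrightarrow> c \<in> V \<Longrightarrow> x + (- a + b + c) \<in> U"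
    using nhds_zero_neg_add_add[OF U(1,2)] by blast
  have "0 \<in> closure ((\<lambda>d. - d + x) ` D)"
    unfolding mem_closure_iff_open_Int
  proof (intro allI impI)
    fix T :: "'a set" assume "open T" "0 \<in> T"
    then obtain d where "d \<in> D" "- d + x \<in> T" by (rule dense_left_translate[OF dense])
    then show "T \<inter> (\<lambda>d. - d + x) ` D \<noteq> {}" by blast
  qed
  then obtain N where N: "N \<in> \<N>" "N \<subseteq> V" "N \<inter> (\<lambda>d. - d + x) ` D \<noteq> {}"
    using cp_network_at_meets[OF cp nbhd_open[OF V(1,2)]] by metis
  then obtain d where d: "d \<in> D" "- d + x \<in> N" by blast
  have "(+) x ` N' \<subseteq> (+) d ` (N + N')" for N'
  proof
    fix y assume "y \<in> (+) x ` N'"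
    then obtain n' where "n' \<in> N'" "y = x + n'" by blast
    then have "y = d + ((- d + x) + n')" by (simp add: add.assoc[symmetric])
    moreover have "(- d + x) + n' \<in> N + N'" using d(2) \<open>n' \<in> N'\<close> by (rule set_plus_intro)
    ultimately show "y \<in> (+) d ` (N + N')" by blast
  qed
  moreover have "(+) d ` (N + N') \<subseteq> O'" if N': "N' \<subseteq> V" for N'
  proof
    fix y assume "y \<in> (+) d ` (N + N')"
    then obtain n n' where n: "n \<in> N" "n' \<in> N'" "y = d + (n + n')"
      by (auto elim: set_plus_elim)
    have "x + (- (- d + x) + n + n') \<in> U" using V(3) d(2) N(2) N' n(1,2) by blast
    moreover have "x + (- (- d + x) + n + n') = y"
      using n(3) by (simp add: minus_add add.assoc[symmetric])
    ultimately show "y \<in> O'" using U(3) by auto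
  qed
  moreover have "(+) d ` (N + N') \<in> translates D ((\<lambda>(N, N'). N + N') ` (\<N> \<times> \<N>))"
    if "N' \<in> \<N>" for N'
    using d(1) N(1) that by (intro translate_in_translates) auto
  ultimately show thesis using that[OF V(1,2)] by metis
qed

lemma cp_network_at_translates_sums:
  fixes D :: "'a::topological_group_add set"
  assumes dense: "\<forall>T. open T \<longrightarrow> T \<noteq> {} \<longrightarrow> T \<inter> D \<noteq> {}" and cp: "cp_network_at \<N> 0"
  shows "cp_network_at (translates D ((\<lambda>(N, N'). N + N') ` (\<N> \<times> \<N>))) x"
  unfolding cp_network_at_def
proof (intro conjI allI impI)
  fix O' assume "nbhd O' x"
  then obtain V where V: "open V" "0 \<in> V" and translate: "\<And>N'. N' \<in> \<N> \<Longrightarrow> N' \<subseteq> V \<Longrightarrow>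
      \<exists>S\<in>translates D ((\<lambda>(N, N'). N + N') ` (\<N> \<times> \<N>)). (+) x ` N' \<subseteq> S \<and> S \<subseteq> O'"
    using cp_network_at_zero_translate[OF dense cp] by metis
  obtain N' where N': "N' \<in> \<N>" "0 \<in> N'" "N' \<subseteq> V"
    using cp_network_at_nbhdD[OF cp nbhd_open[OF V]] by metis
  then have "x \<in> (+) x ` N'" by force
  with translate[OF N'(1,3)]
  show "\<exists>S\<in>translates D ((\<lambda>(N, N'). N + N') ` (\<N> \<times> \<N>)). x \<in> S \<and> S \<subseteq> O'" by blast
next
  fix A O' assume "x \<in> closure A - A \<and> nbhd O' x"
  then have A: "x \<in> closure A" "x \<notin> A" and "nbhd O' x" by simp_all
  then obtain V where V: "open V" "0 \<in> V" and translate: "\<And>N'. N' \<in> \<N> \<Longrightarrow> N' \<subseteq> V \<Longrightarrow>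
      \<exists>S\<in>translates D ((\<lambda>(N, N'). N + N') ` (\<N> \<times> \<N>)). (+) x ` N' \<subseteq> S \<and> S \<subseteq> O'"
    using cp_network_at_zero_translate[OF dense cp] by metis
  have "0 \<in> closure ((+) (- x) ` A)"
    unfolding closure_left_translation using A(1) by (force simp: image_iff)
  moreover have "0 \<notin> (+) (- x) ` A" using A(2) by (auto simp: left_translation_eq_vimage)
  ultimately obtain N' where N': "N' \<in> \<N>" "0 \<in> N'" "N' \<subseteq> V" "infinite (N' \<inter> (+) (- x) ` A)"
    using cp_network_at_closureD[OF cp nbhd_open[OF V]] by metis
  obtain S where S: "S \<in> translates D ((\<lambda>(N, N'). N + N') ` (\<N> \<times> \<N>))" "(+) x ` N' \<subseteq> S" "S \<subseteq> O'"
    using translate[OF N'(1,3)] by blast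
  have "(+) x ` (N' \<inter> (+) (- x) ` A) \<subseteq> S \<inter> A"
    using S(2) by (auto simp: add.assoc[symmetric])
  moreover have "infinite ((+) x ` (N' \<inter> (+) (- x) ` A))"
    using N'(4) by (simp add: finite_image_iff)
  ultimately have "infinite (S \<inter> A)" using finite_subset by blast
  moreover have "x \<in> S" using S(2) N'(2) by force
  ultimately show "\<exists>S\<in>translates D ((\<lambda>(N, N'). N + N') ` (\<N> \<times> \<N>)). x \<in> S \<and> S \<subseteq> O' \<and> infinite (S \<inter> A)"
    using S(1,3) by blast
qed

lemma separable_cn_character_imp_cosmic:
  assumes "separable_space (euclidean :: 'a::topological_group_add topology)"
    and "countable_cn_character TYPE('a)"
  shows "cosmic TYPE('a)"
proof -
  obtain D :: "'a set" where D: "countable D" "\<forall>T. open T \<longrightarrow> T \<noteq> {} \<longrightarrow> T \<inter> D \<noteq> {}"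
    using assms(1) unfolding separable_space_euclidean_iff by blast
  obtain \<N> where \<N>: "countable \<N>" "cn_network_at \<N> (0::'a)"
    using assms(2) unfolding countable_cn_character_def by blast
  have "countable (translates D \<N>)" "is_network (translates D \<N>)"
    using countable_translates[OF D(1) \<N>(1)] is_network_translates[OF D(2) \<N>(2)] .
  then show ?thesis
    unfolding cosmic_def using regular_space_topological_group by blast
qed

lemma separable_ck_character_imp_aleph0_space:
  assumes "separable_space (euclidean :: 'a::topological_group_add topology)"
    and "countable_ck_character TYPE('a)"
  shows "aleph0_space TYPE('a)"
proof -
  obtain D :: "'a set" where D: "countable D" "\<forall>T. open T \<longrightarrow> T \<noteq> {} \<longrightarrow> T \<inter> D \<noteq> {}"
    using assms(1) unfolding separable_space_euclidean_iff by blast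
  obtain \<N> where \<N>: "countable \<N>" "ck_network_at \<N> (0::'a)"
    using assms(2) unfolding countable_ck_character_def by blast
  have "countable (translates D \<N>)" "is_k_network (translates D \<N>)"
    using countable_translates[OF D(1) \<N>(1)] is_k_network_translates[OF D(2) \<N>(2)] .
  then show ?thesis
    unfolding aleph0_space_def using regular_space_topological_group by blast
qed

lemma separable_cp_character_imp_P0_space:
  assumes "separable_space (euclidean :: 'a::topological_group_add topology)"
    and "countable_cp_character TYPE('a)"
  shows "P0_space TYPE('a)"
proof -
  obtain D :: "'a set" where D: "countable D" "\<forall>T. open T \<longrightarrow> T \<noteq> {} \<longrightarrow> T \<inter> D \<noteq> {}"
    using assms(1) unfolding separable_space_euclidean_iff by blast
  obtain \<N> where \<N>: "countable \<N>" "cp_network_at \<N> (0::'a)"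
    using assms(2) unfolding countable_cp_character_def by blast
  let ?M = "translates D ((\<lambda>(N, N'). N + N') ` (\<N> \<times> \<N>))"
  have "countable ?M" using D(1) \<N>(1) by (intro countable_translates) simp_all
  moreover have "\<forall>x. cp_network_at ?M x" using cp_network_at_translates_sums[OF D(2) \<N>(2)] by blast
  ultimately show ?thesis
    unfolding P0_space_def using regular_space_topological_group by blast
qed

theorem mainTheorem1:
  shows "(cosmic TYPE('a::{topological_group_add, t2_space}) \<longleftrightarrow>
            separable_space (euclidean :: 'a topology) \<and> countable_cn_character TYPE('a))
       \<and> (aleph0_space TYPE('a) \<longleftrightarrow>
            separable_space (euclidean :: 'a topology) \<and> countable_ck_character TYPE('a))
       \<and> (P0_space TYPE('a) \<longleftrightarrow>
            separable_space (euclidean :: 'a topology) \<and> countable_cp_character TYPE('a))"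
  using cosmic_imp_separable_cn_character[where 'a='a] separable_cn_character_imp_cosmic[where 'a='a]
    aleph0_space_imp_separable_ck_character[where 'a='a] separable_ck_character_imp_aleph0_space[where 'a='a]
    P0_space_imp_separable_cp_character[where 'a='a] separable_cp_character_imp_P0_space[where 'a='a]
  by blast

end
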